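(* Let $\alpha\in(0,\pi/2]$ and let $I_1(\beta),I_2(\beta)$ be as defined in the context, for $\beta\in(\alpha,\pi)$. Then $(\cos\alpha-\cos\beta)^{1/2}I_1(\beta)$ is strictly decreasing and $(\cos\alpha-\cos\beta)^{1/2}I_2(\beta)$ is strictly increasing in $\beta$; $I_1>I_2$ for $\beta$ close to $\alpha$ and $I_1<I_2$ for $\beta$ close to $\pi$. Consequently there exists a unique $\beta^+\in(\alpha,\pi)$ with $I_1(\beta^+)=I_2(\beta^+)$.
   Context: For $\alpha\in(0,\pi/2]$ and $\beta\in(\alpha,\pi)$: $$I_1(\beta)=\int_0^\alpha\Big(\frac{\cos t-\cos\alpha}{\cos\alpha-\cos\beta}\Big)^{1/2}\frac{dt}{\cos t-\cos\beta},\qquad I_2(\beta)=\int_0^\alpha\Big(\frac{\cos\alpha-\cos\beta}{\cos t-\cos\alpha}\Big)^{1/2}\frac{dt}{\cos t-\cos\beta}.$$ *)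

theory Defs
  imports "HOL-Analysis.Analysis"
begin

text \<open>The integrals I_1(beta), I_2(beta) over [0, alpha] (Henstock-Kurzweil integral;
  the integrands are nonnegative, so this agrees with the (improper) Lebesgue integral).\<close>

definition I1 :: "real \<Rightarrow> real \<Rightarrow> real" where
  "I1 \<alpha> \<beta> = integral {0..\<alpha>}
     (\<lambda>t. sqrt ((cos t - cos \<alpha>) / (cos \<alpha> - cos \<beta>)) / (cos t - cos \<beta>))"

definition I2 :: "real \<Rightarrow> real \<Rightarrow> real" where
  "I2 \<alpha> \<beta> = integral {0..\<alpha>}
     (\<lambda>t. sqrt ((cos \<alpha> - cos \<beta>) / (cos t - cos \<alpha>)) / (cos t - cos \<beta>))"

end

theory Submission
  imports Defs
begin

(* Write x = cos t - cos a >= 0 and d = cos a - cos b > 0, so that cos t - cos b = x + d.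
   Then sqrt d * I1 a b = G(cos b) and sqrt d * I2 a b = K - G(cos b), where
     G y = integral over [0,a] of sqrt (cos t - cos a) / (cos t - y)     (for y < cos a),
     K   = integral over [0,a] of 1 / sqrt (cos t - cos a),
   because d / (sqrt x * (x + d)) = 1 / sqrt x - sqrt x / (x + d).
   Hence I1 a b compared with I2 a b is 2 * G(cos b) compared with K.  Since cos b decreases from cos a to -1
   on (a, pi), the function b \<mapsto> 2 * G(cos b) - K is continuous, strictly decreasing,
   positive near a and negative near pi.  A general unique-crossing lemma (intermediate
   value theorem plus strict monotonicity) then yields the unique root beta+. *)

lemma cos_ge_cos_on:
  fixes a t :: real
  assumes "0 \<le> t" "t \<le> a" "a \<le> pi"
  shows "cos a \<le> cos t"
  using assms by (intro cos_monotone_0_pi_le) auto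

text \<open>The gap \<open>cos t - cos a\<close> vanishes at least linearly as \<open>t \<rightarrow> a\<close>; this controls the
  singularity \<open>1 / sqrt (cos t - cos a)\<close> by a multiple of \<open>1 / sqrt (a - t)\<close>.\<close>

lemma cos_gap_ge_linear:
  fixes a :: real
  assumes a0: "0 < a" and a1: "a \<le> pi/2"
  shows "\<exists>m>0. \<forall>t\<in>{0..a}. m * (a - t) \<le> cos t - cos a"
proof -
  define m where "m = min (sin (a/2)) ((cos (a/2) - cos a) / a)"
  have "0 < sin (a/2)" using a0 a1 by (intro sin_gt_zero) auto
  moreover have "cos a < cos (a/2)" using a0 a1 by (intro cos_monotone_0_pi) auto
  ultimately have m_pos: "m > 0" using a0 by (simp add: m_def)
  have "m * (a - t) \<le> cos t - cos a" if t: "0 \<le> t" "t \<le> a" for t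
  proof (cases "t \<le> a/2")
    case True
    have "cos (a/2) \<le> cos t" using t True a1 by (intro cos_monotone_0_pi_le) auto
    moreover have "m * (a - t) \<le> ((cos (a/2) - cos a) / a) * a"
      using m_pos t a0 by (intro mult_mono) (auto simp: m_def)
    ultimately show ?thesis using a0 by simp
  next
    case False
    show ?thesis
    proof (cases "t = a")
      case False
      with t have "t < a" by simp
      from MVT2[OF this DERIV_cos] obtain z
        where z: "t < z" "z < a" "cos a - cos t = (a - t) * - sin z" by auto
      (* mean value theorem: the slope is sin z with a/2 < z < a, and sin z >= sin (a/2) >= m *)
      have "sin (a/2) \<le> sin z" using z \<open>\<not> t \<le> a/2\<close> a1 by (intro sin_monotone_2pi_le) auto
      hence "m * (a - t) \<le> sin z * (a - t)" using t by (intro mult_right_mono) (auto simp: m_def)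
      then show ?thesis using z(3) by (simp add: algebra_simps)
    qed simp
  qed
  with m_pos show ?thesis by auto
qed

lemma inv_sqrt_has_integral:
  fixes a C :: real
  assumes "0 < a"
  shows "((\<lambda>t. C / sqrt (a - t)) has_integral (2 * C * sqrt a)) {0..a}"
proof -
  have "((\<lambda>t. C / sqrt (a - t)) has_integral
          (-2 * C * sqrt (a - a)) - (-2 * C * sqrt (a - 0))) {0..a}"
  proof (rule fundamental_theorem_of_calculus_interior)
    show "continuous_on {0..a} (\<lambda>t. -2 * C * sqrt (a - t))" by (intro continuous_intros)
    fix t assume "t \<in> {0<..<a}"
    then have "((\<lambda>t. -2 * C * sqrt (a - t)) has_real_derivative C / sqrt (a - t)) (at t)"
      by (auto intro!: derivative_eq_intros simp: field_simps)
    then show "((\<lambda>t. -2 * C * sqrt (a - t)) has_vector_derivative C / sqrt (a - t)) (at t)"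
      by (simp add: has_real_derivative_iff_has_vector_derivative)
  qed (use assms in auto)
  then show ?thesis by simp
qed

definition G_kernel :: "real \<Rightarrow> real \<Rightarrow> real \<Rightarrow> real" where
  "G_kernel a y t = sqrt (cos t - cos a) / (cos t - y)"

definition K_kernel :: "real \<Rightarrow> real \<Rightarrow> real" where
  "K_kernel a t = 1 / sqrt (cos t - cos a)"

definition G_int :: "real \<Rightarrow> real \<Rightarrow> real" where
  "G_int a y = integral {0..a} (G_kernel a y)"

definition K_int :: "real \<Rightarrow> real" where
  "K_int a = integral {0..a} (K_kernel a)"

lemma G_kernel_continuous:
  assumes "a \<le> pi" "y < cos a"
  shows "continuous_on {0..a} (G_kernel a y)"
proof -
  have "\<forall>t\<in>{0..a}. cos t - y \<noteq> 0" using cos_ge_cos_on[of _ a] assms by force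
  then show ?thesis unfolding G_kernel_def by (intro continuous_intros) auto
qed

lemma G_kernel_integrable:
  assumes "a \<le> pi" "y < cos a"
  shows "G_kernel a y integrable_on {0..a}"
  using G_kernel_continuous[OF assms] integrable_continuous_interval by blast

lemma G_kernel_nonneg:
  assumes "a \<le> pi" "y < cos a" "t \<in> {0..a}"
  shows "0 \<le> G_kernel a y t"
  using cos_ge_cos_on[of t a] assms unfolding G_kernel_def by auto

text \<open>Monotonicity in the parameter: increasing \<open>y\<close> shrinks the positive denominator.\<close>

lemma G_kernel_mono:
  assumes "a \<le> pi" "y1 \<le> y2" "y2 < cos a" "t \<in> {0..a}"
  shows "G_kernel a y1 t \<le> G_kernel a y2 t"
  using cos_ge_cos_on[of t a] assms unfolding G_kernel_def
  by (intro divide_left_mono) (auto intro: mult_pos_pos)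

lemma G_kernel_strict_mono:
  assumes "a \<le> pi" "y1 < y2" "y2 < cos a" "t \<in> {0..<a}"
  shows "G_kernel a y1 t < G_kernel a y2 t"
proof -
  have "cos a < cos t" using assms by (intro cos_monotone_0_pi) auto
  then show ?thesis using assms unfolding G_kernel_def
    by (intro divide_strict_left_mono) (auto intro: mult_pos_pos)
qed

lemma G_kernel_le_K_kernel:
  assumes "a \<le> pi" "y < cos a" "t \<in> {0..a}"
  shows "G_kernel a y t \<le> K_kernel a t"
proof -
  define x where "x = cos t - cos a"
  have "0 \<le> x" using cos_ge_cos_on[of t a] assms by (auto simp: x_def)
  show ?thesis
  proof (cases "x = 0")
    case True then show ?thesis by (simp add: G_kernel_def K_kernel_def x_def)
  next
    case False
    hence x_pos: "x > 0" using \<open>0 \<le> x\<close> by simp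
    have "G_kernel a y t = sqrt x / (x + (cos a - y))" by (simp add: G_kernel_def x_def)
    also have "\<dots> \<le> sqrt x / x" using x_pos assms by (intro divide_left_mono) auto
    also have "\<dots> = 1 / sqrt x" using x_pos by (simp add: field_simps flip: real_sqrt_mult)
    finally show ?thesis by (simp add: K_kernel_def x_def)
  qed
qed

lemma G_kernel_tendsto_K_kernel:
  assumes "a \<le> pi" "t \<in> {0..a}"
  shows "(\<lambda>n. G_kernel a (cos a - 1 / real (Suc n)) t) \<longlonglongrightarrow> K_kernel a t"
proof (cases "cos t - cos a = 0")
  case True then show ?thesis by (simp add: G_kernel_def K_kernel_def)
next
  case False
  define x where "x = cos t - cos a"
  have x_pos: "x > 0" using False cos_ge_cos_on[of t a] assms by (auto simp: x_def)
  have "(\<lambda>n. sqrt x / (x + 1 / real (Suc n))) \<longlonglongrightarrow> sqrt x / (x + 0)"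
    using x_pos LIMSEQ_inverse_real_of_nat by (intro tendsto_intros) (auto simp: inverse_eq_divide)
  moreover have "sqrt x / (x + 0) = K_kernel a t"
    using x_pos by (simp add: K_kernel_def x_def[symmetric] field_simps flip: real_sqrt_mult)
  moreover have "G_kernel a (cos a - 1 / real (Suc n)) t = sqrt x / (x + 1 / real (Suc n))" for n
    by (simp add: G_kernel_def x_def)
  ultimately show ?thesis by simp
qed

lemma K_kernel_le_inv_sqrt:
  assumes "m > 0" "\<forall>t\<in>{0..a}. m * (a - t) \<le> cos t - cos a" "t \<in> {0..a}"
  shows "K_kernel a t \<le> (1 / sqrt m) / sqrt (a - t)"
proof (cases "t = a")
  case False
  hence "m * (a - t) > 0" using assms by auto
  moreover have "sqrt (m * (a - t)) \<le> sqrt (cos t - cos a)" using assms by auto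
  ultimately have "1 / sqrt (cos t - cos a) \<le> 1 / sqrt (m * (a - t))"
    by (intro divide_left_mono) auto
  then show ?thesis by (simp add: K_kernel_def real_sqrt_mult)
qed (simp add: K_kernel_def)

text \<open>Monotone convergence: the increasing integrals \<open>G_int a y\<close> stay below the integral of the
  dominating function, so the singular kernel \<open>K_kernel a\<close> is integrable and
  \<open>G_int a y \<rightarrow> K_int a\<close> along \<open>y = cos a - 1/(n+1)\<close>.\<close>

lemma G_int_tendsto_K_int:
  assumes a0: "0 < a" and a1: "a \<le> pi/2"
  shows "K_kernel a integrable_on {0..a}
    \<and> (\<lambda>n. G_int a (cos a - 1 / real (Suc n))) \<longlonglongrightarrow> K_int a"
proof -
  obtain m where m: "m > 0" "\<forall>t\<in>{0..a}. m * (a - t) \<le> cos t - cos a"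
    using cos_gap_ge_linear[OF a0 a1] by blast
  define C where "C = 1 / sqrt m"
  define f where "f n = G_kernel a (cos a - 1 / real (Suc n))" for n
  have api: "a \<le> pi" using a1 pi_gt_zero by linarith
  have f_int: "f n integrable_on {0..a}" for n
    unfolding f_def using api by (intro G_kernel_integrable) auto
  have bound_int: "(\<lambda>t. C / sqrt (a - t)) integrable_on {0..a}"
    using inv_sqrt_has_integral[OF a0] by blast
  have f_bound: "\<bar>integral {0..a} (f n)\<bar> \<le> integral {0..a} (\<lambda>t. C / sqrt (a - t))" for n
  proof -
    have f_nonneg: "\<forall>t\<in>{0..a}. 0 \<le> f n t"
      using G_kernel_nonneg[OF api] by (auto simp: f_def)
    have "f n t \<le> C / sqrt (a - t)" if "t \<in> {0..a}" for t
      using G_kernel_le_K_kernel[OF api _ that, of "cos a - 1 / real (Suc n)"]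
        K_kernel_le_inv_sqrt[OF m that]
      by (simp add: f_def C_def)
    then have "integral {0..a} (f n) \<le> integral {0..a} (\<lambda>t. C / sqrt (a - t))"
      by (intro integral_le[OF f_int bound_int])
    moreover have "0 \<le> integral {0..a} (f n)" using f_nonneg f_int by (intro integral_nonneg) auto
    ultimately show ?thesis by simp
  qed
  have "K_kernel a integrable_on {0..a}
    \<and> (\<lambda>n. integral {0..a} (f n)) \<longlonglongrightarrow> integral {0..a} (K_kernel a)"
  proof (rule monotone_convergence_increasing[OF f_int])
    show "f n t \<le> f (Suc n) t" if "t \<in> {0..a}" for n t
      unfolding f_def using api that by (intro G_kernel_mono) (auto simp: frac_le)
    show "(\<lambda>n. f n t) \<longlonglongrightarrow> K_kernel a t" if "t \<in> {0..a}" for t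
      unfolding f_def using G_kernel_tendsto_K_kernel[OF api that] .
    show "bounded (range (\<lambda>n. integral {0..a} (f n)))"
      unfolding bounded_iff using f_bound by auto
  qed
  then show ?thesis by (simp add: G_int_def K_int_def f_def)
qed

lemma K_kernel_integrable:
  assumes "0 < a" "a \<le> pi/2"
  shows "K_kernel a integrable_on {0..a}"
  using G_int_tendsto_K_int[OF assms] by blast

lemma G_int_le_K_int:
  assumes "0 < a" "a \<le> pi/2" "y < cos a"
  shows "G_int a y \<le> K_int a"
proof -
  have "a \<le> pi" using assms(2) pi_gt_zero by linarith
  then show ?thesis
    unfolding G_int_def K_int_def
    using K_kernel_integrable[OF assms(1,2)] G_kernel_integrable G_kernel_le_K_kernel assms(3)
    by (intro integral_le) auto
qed

text \<open>Strict monotonicity of \<open>G_int a\<close>: the continuous kernels are strictly ordered on \<open>(0, a)\<close>.\<close>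

lemma G_int_strict_mono:
  assumes "0 < a" "a \<le> pi" "y1 < y2" "y2 < cos a"
  shows "G_int a y1 < G_int a y2"
  unfolding G_int_def using assms
  by (intro integral_less_real G_kernel_continuous G_kernel_strict_mono) auto

lemma G_int_mono:
  assumes "0 < a" "a \<le> pi" "y1 \<le> y2" "y2 < cos a"
  shows "G_int a y1 \<le> G_int a y2"
  using G_int_strict_mono[OF assms(1,2) _ assms(4)] assms(3)
  by (cases "y1 = y2") (auto simp: less_imp_le)

lemma G_int_pos:
  assumes "0 < a" "a \<le> pi" "y < cos a"
  shows "0 < G_int a y"
proof -
  have "G_kernel a y t > 0" if "t \<in> {0<..<a}" for t
    using cos_monotone_0_pi[of t a] that assms by (auto simp: G_kernel_def)
  then have "integral {0..a} (\<lambda>_. 0) < integral {0..a} (G_kernel a y)"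
    using assms by (intro integral_less_real G_kernel_continuous) auto
  then show ?thesis by (simp add: G_int_def)
qed

lemma K_int_pos:
  assumes "0 < a" "a \<le> pi/2"
  shows "0 < K_int a"
  using G_int_pos[of a "cos a - 1"] G_int_le_K_int[OF assms, of "cos a - 1"] assms pi_gt_zero
  by simp

lemma G_int_continuous:
  assumes "a \<le> pi"
  shows "continuous_on {..<cos a} (G_int a)"
proof -
  have "\<forall>p\<in>{..<cos a} \<times> cbox 0 a. cos (snd p) - fst p \<noteq> 0"
    using cos_ge_cos_on[of _ a] assms by force
  then have "continuous_on ({..<cos a} \<times> cbox 0 a) (\<lambda>(y, t). G_kernel a y t)"
    unfolding G_kernel_def case_prod_unfold by (intro continuous_intros) auto
  from integral_continuous_on_param[OF this] show ?thesis
    by (simp add: G_int_def)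
qed

text \<open>At the far end \<open>y = cos pi = -1\<close> the kernel combination
  \<open>K_kernel - 2 * G_kernel (-1) = (1 + 2 cos a - cos t) / ((1 + cos t) sqrt (cos t - cos a))\<close>
  is bounded below by a continuous function that is positive on \<open>(0, a)\<close>; here
  \<open>cos a \<ge> 0\<close>, i.e. \<open>a \<le> pi/2\<close>, is essential.\<close>

lemma K_kernel_minus_twice_G_kernel_ge:
  assumes a0: "0 < a" and a1: "a \<le> pi/2" and t: "t \<in> {0..a}"
  shows "(1 - cos t) * (cos t - cos a) / 2 \<le> K_kernel a t - 2 * G_kernel a (-1) t"
proof -
  define x where "x = cos t - cos a"
  have ca0: "0 \<le> cos a" using a0 a1 by (intro cos_ge_zero) auto
  have "0 \<le> x" using cos_ge_cos_on[of t a] t a1 pi_gt_zero by (simp add: x_def)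
  show ?thesis
  proof (cases "x = 0")
    case True then show ?thesis by (simp add: K_kernel_def G_kernel_def x_def)
  next
    case False
    with \<open>0 \<le> x\<close> have x_pos: "0 < x" by simp
    have x1: "x \<le> 1" using ca0 cos_le_one[of t] unfolding x_def by linarith
    have sx: "0 < sqrt x" "sqrt x \<le> 1" "sqrt x * sqrt x = x" using x_pos x1 by auto
    have cp: "0 < cos t + 1" using ca0 x_pos by (simp add: x_def)
    have "(1 - cos t) * x / 2 \<le> (1 - cos t) / 2"
      using x1 by (intro divide_right_mono mult_left_le) auto
    also have "\<dots> \<le> (1 - cos t) / ((cos t + 1) * sqrt x)"
    proof -
      have "(cos t + 1) * sqrt x \<le> 2 * 1" using sx cp cos_le_one[of t] by (intro mult_mono) auto
      then show ?thesis using sx cp by (intro divide_left_mono) auto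
    qed
    also have "\<dots> \<le> (1 + 2 * cos a - cos t) / ((cos t + 1) * sqrt x)"
      using ca0 sx cp by (intro divide_right_mono) auto
    also have "\<dots> = K_kernel a t - 2 * G_kernel a (-1) t"
      using sx cp by (simp add: K_kernel_def G_kernel_def x_def[symmetric] field_simps)
        (simp add: x_def algebra_simps)
    finally show ?thesis by (simp add: x_def)
  qed
qed

lemma twice_G_int_minus_one_less_K_int:
  assumes a0: "0 < a" and a1: "a \<le> pi/2"
  shows "2 * G_int a (-1) < K_int a"
proof -
  define g where "g t = (1 - cos t) * (cos t - cos a) / 2" for t
  have api: "a \<le> pi" and ym: "-1 < cos a"
    using a0 a1 pi_gt_zero cos_ge_zero[of a] by auto
  have G_ker_int: "G_kernel a (-1) integrable_on {0..a}" using G_kernel_integrable[OF api ym] .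
  have g_cont: "continuous_on {0..a} g" unfolding g_def by (intro continuous_intros) auto
  have "g t > 0" if "t \<in> {0<..<a}" for t
  proof -
    have "cos t < cos 0" "cos a < cos t" using that api by (intro cos_monotone_0_pi; simp)+
    then show ?thesis by (simp add: g_def)
  qed
  then have "integral {0..a} (\<lambda>_. 0) < integral {0..a} g"
    using a0 g_cont by (intro integral_less_real) auto
  also have "\<dots> \<le> integral {0..a} (\<lambda>t. K_kernel a t - 2 * G_kernel a (-1) t)"
  proof (rule integral_le)
    show "g integrable_on {0..a}" using g_cont integrable_continuous_interval by blast
    show "(\<lambda>t. K_kernel a t - 2 * G_kernel a (-1) t) integrable_on {0..a}"
      using K_kernel_integrable[OF a0 a1] G_ker_int by (intro integrable_diff) (auto intro: integrable_cmul)
  qed (use K_kernel_minus_twice_G_kernel_ge[OF a0 a1] in \<open>simp add: g_def\<close>)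
  also have "\<dots> = K_int a - 2 * G_int a (-1)"
    using K_kernel_integrable[OF a0 a1] G_ker_int
    by (simp add: K_int_def G_int_def integral_diff integrable_cmul)
  finally show ?thesis by simp
qed

text \<open>With \<open>x = cos t - cos a\<close> and
  \<open>d = cos a - cos b\<close> the integrand of \<open>I2\<close> is
  \<open>sqrt (d / x) / (x + d) = (1 / sqrt d) * (1 / sqrt x - sqrt x / (x + d))\<close>.\<close>

lemma I1_I2_via_G_int:
  assumes a0: "0 < a" and a1: "a \<le> pi/2" and b: "a < b" "b < pi"
  shows "sqrt (cos a - cos b) * I1 a b = G_int a (cos b)
    \<and> sqrt (cos a - cos b) * I2 a b = K_int a - G_int a (cos b)"
proof -
  define d where "d = cos a - cos b"
  have api: "a \<le> pi" and cb: "cos b < cos a"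
    using a0 a1 b pi_gt_zero by (auto intro: cos_monotone_0_pi)
  then have d_pos: "d > 0" by (simp add: d_def)
  have G_ker_int: "G_kernel a (cos b) integrable_on {0..a}" using G_kernel_integrable[OF api cb] .
  have "I1 a b = integral {0..a} (\<lambda>t. (1 / sqrt d) * G_kernel a (cos b) t)"
    unfolding I1_def d_def G_kernel_def by (simp add: real_sqrt_divide)
  also have "\<dots> = G_int a (cos b) / sqrt d" by (simp add: G_int_def)
  finally have I1_eq: "I1 a b = G_int a (cos b) / sqrt d" .
  have "I2 a b = integral {0..a} (\<lambda>t. (1 / sqrt d) * (K_kernel a t - G_kernel a (cos b) t))"
    unfolding I2_def
  proof (rule integral_cong)
    fix t assume t: "t \<in> {0..a}"
    define x where "x = cos t - cos a"
    have "0 \<le> x" using cos_ge_cos_on[of t a] t api by (simp add: x_def)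
    show "sqrt ((cos a - cos b) / (cos t - cos a)) / (cos t - cos b)
        = 1 / sqrt d * (K_kernel a t - G_kernel a (cos b) t)"
    proof (cases "x = 0")
      case True
      then show ?thesis by (simp add: K_kernel_def G_kernel_def x_def[symmetric])
    next
      case False
      define u v where "u = sqrt x" and "v = sqrt d"
      have uv: "0 < u" "0 < v" using False \<open>0 \<le> x\<close> d_pos by (auto simp: u_def v_def)
      have x_eq: "cos t - cos a = u\<^sup>2" and d_eq: "cos a - cos b = v\<^sup>2"
        using \<open>0 \<le> x\<close> d_pos by (simp_all add: u_def v_def x_def d_def)
      have "cos t - cos b = u\<^sup>2 + v\<^sup>2" using x_eq d_eq by simp
      then have "sqrt ((cos a - cos b) / (cos t - cos a)) / (cos t - cos b) = v / u / (u\<^sup>2 + v\<^sup>2)"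
        using uv by (simp add: x_eq d_eq real_sqrt_divide)
      also have "\<dots> = (1 / v) * (1 / u - u / (u\<^sup>2 + v\<^sup>2))"
        using uv by (simp add: field_simps power2_eq_square)
      also have "\<dots> = 1 / sqrt d * (K_kernel a t - G_kernel a (cos b) t)"
        using \<open>cos t - cos b = u\<^sup>2 + v\<^sup>2\<close> x_eq uv
        by (simp add: K_kernel_def G_kernel_def x_eq u_def v_def)
      finally show ?thesis .
    qed
  qed
  also have "\<dots> = (K_int a - G_int a (cos b)) / sqrt d"
    using K_kernel_integrable[OF a0 a1] G_ker_int by (simp add: integral_diff G_int_def K_int_def)
  finally show ?thesis using I1_eq d_pos by (simp add: d_def)
qed

lemma I1_I2_compare:
  assumes "0 < a" "a \<le> pi/2" "a < b" "b < pi"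
  shows "(I2 a b < I1 a b \<longleftrightarrow> K_int a < 2 * G_int a (cos b))
    \<and> (I1 a b < I2 a b \<longleftrightarrow> 2 * G_int a (cos b) < K_int a)
    \<and> (I1 a b = I2 a b \<longleftrightarrow> 2 * G_int a (cos b) = K_int a)"
proof -
  define s where "s = sqrt (cos a - cos b)"
  have "cos b < cos a" using assms by (intro cos_monotone_0_pi) auto
  then have "0 < s" by (simp add: s_def)
  moreover have "s * (I1 a b - I2 a b) = 2 * G_int a (cos b) - K_int a"
    using I1_I2_via_G_int[OF assms] by (simp add: s_def right_diff_distrib)
  ultimately have diff: "I1 a b - I2 a b = (2 * G_int a (cos b) - K_int a) / s"
    by (simp add: eq_divide_eq mult.commute)
  have "0 < (2 * G_int a (cos b) - K_int a) / s \<longleftrightarrow> K_int a < 2 * G_int a (cos b)"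
    "(2 * G_int a (cos b) - K_int a) / s < 0 \<longleftrightarrow> 2 * G_int a (cos b) < K_int a"
    using \<open>0 < s\<close> by (auto simp: zero_less_divide_iff divide_less_0_iff)
  with diff show ?thesis by (smt (verit))
qed

text \<open>Near \<open>b = a\<close> we have \<open>cos b \<rightarrow> cos a\<close>, so \<open>G_int a (cos b)\<close> approaches \<open>K_int a > 0\<close>
  and exceeds \<open>K_int a / 2\<close>.\<close>

lemma twice_G_int_cos_gt_K_int_near_alpha:
  assumes a0: "0 < a" and a1: "a \<le> pi/2"
  shows "\<forall>\<^sub>F b in at_right a. K_int a < 2 * G_int a (cos b)"
proof -
  have api: "a < pi" using a1 pi_gt_zero by linarith
  have "K_int a / 2 < K_int a" using K_int_pos[OF a0 a1] by simp
  from order_tendstoD(1)[OF conjunct2[OF G_int_tendsto_K_int[OF a0 a1]] this]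
  obtain y0 where y0: "K_int a / 2 < G_int a y0" "y0 < cos a"
    unfolding eventually_sequentially by auto
  have "(cos \<longlongrightarrow> cos a) (at_right a)" by (intro tendsto_intros)
  from order_tendstoD(1)[OF this y0(2)]
  have "\<forall>\<^sub>F b in at_right a. y0 < cos b" .
  moreover have "\<forall>\<^sub>F b in at_right a. b \<in> {a<..<pi}" using eventually_at_right_real[OF api] .
  ultimately show ?thesis
  proof eventually_elim
    case (elim b)
    have "cos b < cos a" using elim(2) a0 by (intro cos_monotone_0_pi) auto
    then have "G_int a y0 \<le> G_int a (cos b)"
      using elim(1) a0 api by (intro G_int_mono) auto
    then show ?case using y0(1) by simp
  qed
qed

text \<open>Near \<open>b = pi\<close> we have \<open>cos b \<rightarrow> -1\<close>, and \<open>2 * G_int a (-1) < K_int a\<close>.\<close>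

lemma twice_G_int_cos_lt_K_int_near_pi:
  assumes a0: "0 < a" and a1: "a \<le> pi/2"
  shows "\<forall>\<^sub>F b in at_left pi. 2 * G_int a (cos b) < K_int a"
proof -
  have "(cos \<longlongrightarrow> cos pi) (at_left pi)" by (intro tendsto_intros)
  then have cos_lim: "(cos \<longlongrightarrow> -1) (at_left pi)" by simp
  have "-1 < cos a" using cos_ge_zero[of a] a0 a1 by simp
  then have "isCont (G_int a) (-1)"
    using G_int_continuous[of a] a1 pi_gt_zero
    by (simp add: continuous_on_eq_continuous_at)
  from isCont_tendsto_compose[OF this cos_lim]
  have "((\<lambda>b. G_int a (cos b)) \<longlongrightarrow> G_int a (-1)) (at_left pi)" .
  moreover have "G_int a (-1) < K_int a / 2"
    using twice_G_int_minus_one_less_K_int[OF a0 a1] by simp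
  ultimately have "\<forall>\<^sub>F b in at_left pi. G_int a (cos b) < K_int a / 2"
    by (rule order_tendstoD(2))
  then show ?thesis by eventually_elim simp
qed

lemma unique_crossing:
  fixes f :: "real \<Rightarrow> real"
  assumes lr: "l < r"
    and cont: "continuous_on {l<..<r} f"
    and decr: "\<And>x y. x \<in> {l<..<r} \<Longrightarrow> y \<in> {l<..<r} \<Longrightarrow> x < y \<Longrightarrow> f y < f x"
    and near_l: "\<forall>\<^sub>F x in at_right l. c < f x"
    and near_r: "\<forall>\<^sub>F x in at_left r. f x < c"
  shows "\<exists>!x. x \<in> {l<..<r} \<and> f x = c"
proof -
  define m where "m = (l + r) / 2"
  have m: "l < m" "m < r" using lr by (auto simp: m_def)
  have "\<forall>\<^sub>F x in at_right l. c < f x \<and> x \<in> {l<..<m}"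
    using near_l eventually_at_right_real[OF m(1)] by (rule eventually_conj)
  then obtain x1 where x1: "c < f x1" "x1 \<in> {l<..<m}"
    using eventually_happens'[OF trivial_limit_at_right_real] by blast
  have "\<forall>\<^sub>F x in at_left r. f x < c \<and> x \<in> {m<..<r}"
    using near_r eventually_at_left_real[OF m(2)] by (rule eventually_conj)
  then obtain x2 where x2: "f x2 < c" "x2 \<in> {m<..<r}"
    using eventually_happens'[OF trivial_limit_at_left_real] by blast
  have sub: "{x1..x2} \<subseteq> {l<..<r}" using x1 x2 by auto
  obtain x where x: "x1 \<le> x" "x \<le> x2" "f x = c"
    using IVT2'[of f x2 c x1] x1 x2 continuous_on_subset[OF cont sub] by auto
  show ?thesis
  proof (rule ex1I)
    show "x \<in> {l<..<r} \<and> f x = c" using x sub by auto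
    show "z = x" if "z \<in> {l<..<r} \<and> f z = c" for z
      using decr[of z x] decr[of x z] that x sub by (cases z x rule: linorder_cases) auto
  qed
qed

lemma G_int_cos_continuous:
  assumes "0 < a" "a < pi"
  shows "continuous_on {a<..<pi} (\<lambda>b. G_int a (cos b))"
proof (rule continuous_on_compose2[OF G_int_continuous])
  show "cos ` {a<..<pi} \<subseteq> {..<cos a}" using assms by (auto intro: cos_monotone_0_pi)
qed (use assms in \<open>auto intro: continuous_intros\<close>)

lemma G_int_cos_strict_antimono:
  assumes "0 < a" "b1 \<in> {a<..<pi}" "b2 \<in> {a<..<pi}" "b1 < b2"
  shows "G_int a (cos b2) < G_int a (cos b1)"
  using assms by (intro G_int_strict_mono cos_monotone_0_pi) auto

theorem mainTheorem4:
  fixes \<alpha> :: real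
  assumes "0 < \<alpha>" and "\<alpha> \<le> pi / 2"
  shows "(\<forall>\<beta>1\<in>{\<alpha><..<pi}. \<forall>\<beta>2\<in>{\<alpha><..<pi}. \<beta>1 < \<beta>2 \<longrightarrow>
            sqrt (cos \<alpha> - cos \<beta>2) * I1 \<alpha> \<beta>2 < sqrt (cos \<alpha> - cos \<beta>1) * I1 \<alpha> \<beta>1)
       \<and> (\<forall>\<beta>1\<in>{\<alpha><..<pi}. \<forall>\<beta>2\<in>{\<alpha><..<pi}. \<beta>1 < \<beta>2 \<longrightarrow>
            sqrt (cos \<alpha> - cos \<beta>1) * I2 \<alpha> \<beta>1 < sqrt (cos \<alpha> - cos \<beta>2) * I2 \<alpha> \<beta>2)
       \<and> (\<forall>\<^sub>F \<beta> in at_right \<alpha>. I1 \<alpha> \<beta> > I2 \<alpha> \<beta>)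
       \<and> (\<forall>\<^sub>F \<beta> in at_left pi. I1 \<alpha> \<beta> < I2 \<alpha> \<beta>)
       \<and> (\<exists>!\<beta>. \<beta> \<in> {\<alpha><..<pi} \<and> I1 \<alpha> \<beta> = I2 \<alpha> \<beta>)"
proof -
  have \<alpha>_lt_pi: "\<alpha> < pi" using assms(2) pi_gt_zero by linarith
  note scaled = I1_I2_via_G_int[OF assms] and compare = I1_I2_compare[OF assms]
  note decr = G_int_cos_strict_antimono[OF assms(1)]
  have near_\<alpha>: "\<forall>\<^sub>F \<beta> in at_right \<alpha>. I1 \<alpha> \<beta> > I2 \<alpha> \<beta>"
    using twice_G_int_cos_gt_K_int_near_alpha[OF assms] eventually_at_right_real[OF \<alpha>_lt_pi]
    by eventually_elim (use compare in auto)
  have near_pi: "\<forall>\<^sub>F \<beta> in at_left pi. I1 \<alpha> \<beta> < I2 \<alpha> \<beta>"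
    using twice_G_int_cos_lt_K_int_near_pi[OF assms] eventually_at_left_real[OF \<alpha>_lt_pi]
    by eventually_elim (use compare in auto)
  have "\<exists>!\<beta>. \<beta> \<in> {\<alpha><..<pi} \<and> G_int \<alpha> (cos \<beta>) = K_int \<alpha> / 2"
  proof (rule unique_crossing[OF \<alpha>_lt_pi G_int_cos_continuous[OF assms(1) \<alpha>_lt_pi] decr])
    show "\<forall>\<^sub>F \<beta> in at_right \<alpha>. K_int \<alpha> / 2 < G_int \<alpha> (cos \<beta>)"
      using twice_G_int_cos_gt_K_int_near_alpha[OF assms] by eventually_elim simp
    show "\<forall>\<^sub>F \<beta> in at_left pi. G_int \<alpha> (cos \<beta>) < K_int \<alpha> / 2"
      using twice_G_int_cos_lt_K_int_near_pi[OF assms] by eventually_elim simp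
  qed
  moreover have "I1 \<alpha> \<beta> = I2 \<alpha> \<beta> \<longleftrightarrow> G_int \<alpha> (cos \<beta>) = K_int \<alpha> / 2" if "\<beta> \<in> {\<alpha><..<pi}" for \<beta>
    using compare that by auto
  ultimately have unique: "\<exists>!\<beta>. \<beta> \<in> {\<alpha><..<pi} \<and> I1 \<alpha> \<beta> = I2 \<alpha> \<beta>"
    by (metis (no_types, lifting))
  show ?thesis using scaled decr near_\<alpha> near_pi unique by auto
qed

end
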